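(* Consider an open quantum system on a finite-dimensional Hilbert space $\mathcal H$ with Hamiltonian $H$ and a single coupling operator $L$, and let $V$ be a Lyapunov operator of the system (commuting with $H$). If $\mathfrak D(V)\ge cV^2$ for some constant $c>0$, then $V$ is asymptotically ground-state stable, i.e. $\operatorname{tr}(V\rho_t)\to0$ as $t\to\infty$ for every initial density state $\rho_0$.
   Context: The density state (positive semidefinite, trace one) evolves by $\dot\rho_t=-i[H,\rho_t]+L\rho_tL^\dagger-\tfrac12L^\dagger L\rho_t-\tfrac12\rho_tL^\dagger L$; for an observable $X$ commuting with $H$ the generator is $\mathcal G(X)=L^\dagger XL-\tfrac12L^\dagger LX-\tfrac12XL^\dagger L$ and $\frac{d}{dt}\operatorname{tr}(X\rho_t)=\operatorname{tr}(\mathcal G(X)\rho_t)$. Standing assumption: the observables considered commute with $H$. A Lyapunov operator is a self-adjoint $V\ge0$ whose smallest eigenvalue is $0$ and with $\mathcal G(V)\le0$. The dissipation functional is $\mathfrak D(X)=\mathcal G(X^\dagger X)-\mathcal G(X^\dagger)X-X^\dagger\mathcal G(X)$, which equals $[L^\dagger,X^\dagger][X,L]$. *)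

theory Defs
  imports "HOL-Analysis.Analysis"
begin

type_synonym 'n cmat = "complex^'n^'n"

definition adj :: "'n::finite cmat \<Rightarrow> 'n cmat" where
  "adj A = (\<chi> i j. cnj (A $ j $ i))"

definition herm_inner :: "complex^'n::finite \<Rightarrow> complex^'n \<Rightarrow> complex" where
  "herm_inner x y = (\<Sum>i\<in>UNIV. cnj (x $ i) * y $ i)"

definition self_adjoint :: "'n::finite cmat \<Rightarrow> bool" where
  "self_adjoint A \<longleftrightarrow> adj A = A"

definition psd :: "'n::finite cmat \<Rightarrow> bool" where
  "psd A \<longleftrightarrow> self_adjoint A \<and> (\<forall>x. 0 \<le> Re (herm_inner x (A *v x)))"

definition loewner_le :: "'n::finite cmat \<Rightarrow> 'n cmat \<Rightarrow> bool" where
  "loewner_le A B \<longleftrightarrow> psd (B - A)"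

definition density_state :: "'n::finite cmat \<Rightarrow> bool" where
  "density_state \<rho> \<longleftrightarrow> psd \<rho> \<and> trace \<rho> = 1"

definition lindblad :: "'n::finite cmat \<Rightarrow> 'n cmat \<Rightarrow> 'n cmat \<Rightarrow> 'n cmat" where
  "lindblad H L \<rho> =
     (\<chi> i j. - \<i> * (H ** \<rho> - \<rho> ** H) $ i $ j)
     + L ** \<rho> ** adj L
     - (\<chi> i j. (1/2) * (adj L ** L ** \<rho>) $ i $ j)
     - (\<chi> i j. (1/2) * (\<rho> ** adj L ** L) $ i $ j)"

text \<open>Heisenberg-picture generator (for observables commuting with H).\<close>
definition gen :: "'n::finite cmat \<Rightarrow> 'n cmat \<Rightarrow> 'n cmat" where
  "gen L X = adj L ** X ** L
     - (\<chi> i j. (1/2) * (adj L ** L ** X) $ i $ j)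
     - (\<chi> i j. (1/2) * (X ** adj L ** L) $ i $ j)"

definition dissipation :: "'n::finite cmat \<Rightarrow> 'n cmat \<Rightarrow> 'n cmat" where
  "dissipation L X = gen L (adj X ** X) - gen L (adj X) ** X - adj X ** gen L X"

text \<open>Lyapunov operator: self-adjoint, V \<ge> 0, smallest eigenvalue 0
  (i.e. 0 is an eigenvalue), and G(V) \<le> 0.\<close>
definition lyapunov :: "'n::finite cmat \<Rightarrow> 'n cmat \<Rightarrow> bool" where
  "lyapunov L V \<longleftrightarrow> psd V \<and> (\<exists>x. x \<noteq> 0 \<and> V *v x = 0) \<and> loewner_le (gen L V) 0"

end

theory Submission
  imports Defs
begin

text \<open>
  Write \<open>A = -\<G>(V) \<ge> 0\<close>.  The expectation \<open>f(t) = tr(V\<rho>\<^sub>t)\<close> is nonincreasing with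
  \<open>f' = -tr(A\<rho>\<^sub>t)\<close>, while the second moment \<open>g(t) = tr(V\<^sup>2\<rho>\<^sub>t)\<close> is bounded and, since
  \<open>\<G>(V\<^sup>2) = \<D>(V) - AV - VA\<close>, the Cauchy--Schwarz inequality for the state \<open>\<rho>\<^sub>t\<close> gives
  \<open>g' \<ge> (c/2) g - \<mu> tr(A\<rho>\<^sub>t)\<close> for a constant \<open>\<mu>\<close>.  If \<open>f\<close> stayed above \<open>e > 0\<close>, then
  \<open>g \<ge> f\<^sup>2 \<ge> e\<^sup>2\<close> would make \<open>g - \<mu> f\<close> grow at least linearly, contradicting boundedness.
  The statement only assumes that \<open>\<rho>\<close> solves the master equation, so positivity, hermiticity
  and trace preservation of the flow are proved along the way; positivity follows from a
  barrier argument, because the generator points inward at every boundary point of the cone.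
\<close>

definition smat :: "complex \<Rightarrow> 'n::finite cmat \<Rightarrow> 'n cmat" where
  "smat z A = (\<chi> i j. z * A $ i $ j)"

definition outer :: "complex^'n::finite \<Rightarrow> complex^'n \<Rightarrow> 'n cmat" where
  "outer v w = (\<chi> i j. v $ i * cnj (w $ j))"

abbreviation quad_form :: "'n::finite cmat \<Rightarrow> complex^'n \<Rightarrow> complex" where
  "quad_form A x \<equiv> herm_inner x (A *v x)"

lemma adj_adj [simp]: "adj (adj A) = A"
  by (simp add: adj_def vec_eq_iff)

lemma adj_mult: "adj (A ** B) = adj B ** adj (A::'n::finite cmat)"
  by (simp add: adj_def vec_eq_iff matrix_matrix_mult_def mult.commute)

lemma adj_add: "adj (A + B) = adj A + adj B"
  by (simp add: adj_def vec_eq_iff)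

lemma adj_diff: "adj (A - B) = adj A - adj B"
  by (simp add: adj_def vec_eq_iff)

lemma adj_mat1 [simp]: "adj (mat 1) = mat 1"
  by (simp add: adj_def vec_eq_iff mat_def)

lemma adj_smat: "adj (smat z A) = smat (cnj z) (adj A)"
  by (simp add: adj_def smat_def vec_eq_iff)

lemma adj_scaleR: "adj (r *\<^sub>R A) = r *\<^sub>R adj A"
  by (simp add: adj_def vec_eq_iff)

lemma adj_outer_self: "adj (outer v v) = outer v v"
  by (simp add: adj_def outer_def vec_eq_iff mult.commute)

lemma bounded_linear_adj: "bounded_linear (adj :: 'n::finite cmat \<Rightarrow> _)"
  by (rule linear_conv_bounded_linear[THEN iffD1], rule linearI) (simp_all add: adj_add adj_scaleR)

lemma trace_adj: "trace (adj A) = cnj (trace A)"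
  by (simp add: adj_def trace_def)

lemma trace_smat: "trace (smat z A) = z * trace A"
  by (simp add: smat_def trace_def sum_distrib_left)

lemma trace_scaleR: "trace (r *\<^sub>R (A::'n::finite cmat)) = of_real r * trace A"
proof -
  have "trace (r *\<^sub>R A) = r *\<^sub>R trace A" by (simp add: trace_def scaleR_sum_right)
  then show ?thesis by (simp add: scaleR_conv_of_real)
qed

lemma trace_uminus: "trace (- (A::'n::finite cmat)) = - trace A"
  by (simp add: trace_def sum_negf)

lemma bounded_linear_trace: "bounded_linear (trace :: 'n::finite cmat \<Rightarrow> complex)"
  by (rule linear_conv_bounded_linear[THEN iffD1], rule linearI) (simp_all add: trace_add trace_scaleR scaleR_conv_of_real[where 'a=complex])

lemma smat_mult_left: "smat z A ** B = smat z (A ** B)"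
  by (simp add: smat_def vec_eq_iff matrix_matrix_mult_def sum_distrib_left mult.assoc)

lemma smat_mult_right: "A ** smat z B = smat z (A ** B)"
  by (simp add: smat_def vec_eq_iff matrix_matrix_mult_def sum_distrib_left mult_ac)

lemma smat_add: "smat z (A + B) = smat z A + smat z B"
  by (simp add: smat_def vec_eq_iff algebra_simps)

lemma smat_diff: "smat z (A - B) = smat z A - smat z B"
  by (simp add: smat_def vec_eq_iff algebra_simps)

lemma smat_uminus: "smat (- z) A = - smat z A"
  by (simp add: smat_def vec_eq_iff)

lemma smat_scaleR: "smat z (r *\<^sub>R A) = r *\<^sub>R smat z A"
  by (simp add: smat_def vec_eq_iff scaleR_conv_of_real mult_ac)

lemma smat_mult_vec: "smat z A *v x = z *s (A *v x)"
  by (simp add: smat_def vec_eq_iff matrix_vector_mult_def sum_distrib_left mult.assoc)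

lemma scaleR_matrix_mult_left: "(r *\<^sub>R A) ** B = r *\<^sub>R (A ** (B::'n::finite cmat))"
  by (simp add: scalar_matrix_assoc)

lemma scaleR_matrix_mult_right: "A ** (r *\<^sub>R B) = r *\<^sub>R (A ** (B::'n::finite cmat))"
  by (simp add: matrix_scalar_ac scalar_matrix_assoc)

lemma bounded_linear_Re_trace_mult: "bounded_linear (\<lambda>X::'n::finite cmat. Re (trace (W ** X)))"
  by (rule linear_conv_bounded_linear[THEN iffD1], rule linearI)
     (simp_all add: matrix_add_ldistrib trace_add scaleR_matrix_mult_right trace_scaleR)

lemma matrix_diff_ldistrib: "(A::'n::finite cmat) ** (B - C) = A ** B - A ** C"
  by (simp add: vec_eq_iff matrix_matrix_mult_def algebra_simps sum_subtractf)

lemma matrix_diff_rdistrib: "((A::'n::finite cmat) - B) ** C = A ** C - B ** C"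
  by (simp add: vec_eq_iff matrix_matrix_mult_def algebra_simps sum_subtractf)

lemma matrix_add_rdistrib': "((A::'n::finite cmat) + B) ** C = A ** C + B ** C"
  by (simp add: vec_eq_iff matrix_matrix_mult_def algebra_simps sum.distrib)

lemma matrix_uminus_left: "(- (A::'n::finite cmat)) ** B = - (A ** B)"
  by (simp add: vec_eq_iff matrix_matrix_mult_def sum_negf)

lemma matrix_uminus_right: "(A::'n::finite cmat) ** (- B) = - (A ** B)"
  by (simp add: vec_eq_iff matrix_matrix_mult_def sum_negf)

lemma mult_vec_smult: "(A::'n::finite cmat) *v (c *s x) = c *s (A *v x)"
  by (simp add: vec_eq_iff matrix_vector_mult_def sum_distrib_left mult_ac)

lemma scaleR_mult_vec: "(r *\<^sub>R (A::'n::finite cmat)) *v x = of_real r *s (A *v x)"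
  by (simp add: vec_eq_iff matrix_vector_mult_def sum_distrib_left scaleR_conv_of_real[where 'a=complex] mult_ac)

lemma scaleR_eq_of_real_smult: "(r::real) *\<^sub>R (x::complex^'n::finite) = of_real r *s x"
  by (simp add: vec_eq_iff scaleR_conv_of_real[where 'a=complex])

lemma outer_mult_vec: "outer v w *v x = herm_inner w x *s v"
  by (simp add: outer_def vec_eq_iff matrix_vector_mult_def herm_inner_def sum_distrib_left mult_ac)

lemma trace_herm_real:
  assumes "self_adjoint A" "self_adjoint B"
  shows "trace (A ** B) = of_real (Re (trace (A ** B)))"
proof -
  have "cnj (trace (A ** B)) = trace (B ** A)"
    using assms by (simp add: trace_adj[symmetric] adj_mult self_adjoint_def)
  also have "\<dots> = trace (A ** B)" by (rule trace_mul_sym)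
  finally show ?thesis by (metis Reals_cnj_iff complex_is_Real_iff of_real_Re)
qed

lemma herm_inner_adj: "herm_inner x (A *v y) = herm_inner (adj A *v x) y"
proof -
  have "herm_inner x (A *v y) = (\<Sum>i\<in>UNIV. \<Sum>j\<in>UNIV. cnj (x$i) * A$i$j * y$j)"
    unfolding herm_inner_def matrix_vector_mult_def by (simp add: sum_distrib_left mult.assoc)
  also have "\<dots> = (\<Sum>j\<in>UNIV. \<Sum>i\<in>UNIV. cnj (x$i) * A$i$j * y$j)"
    by (rule sum.swap)
  also have "\<dots> = herm_inner (adj A *v x) y"
    unfolding herm_inner_def adj_def matrix_vector_mult_def
    by (simp add: sum_distrib_left mult.commute mult.left_commute)
  finally show ?thesis .
qed

lemma herm_inner_cnj: "cnj (herm_inner x y) = herm_inner y x"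
  by (simp add: herm_inner_def mult.commute)

lemma herm_inner_add_right: "herm_inner x (y + z) = herm_inner x y + herm_inner x z"
  by (simp add: herm_inner_def algebra_simps sum.distrib)

lemma herm_inner_diff_right: "herm_inner x (y - z) = herm_inner x y - herm_inner x z"
  by (simp add: herm_inner_def algebra_simps sum_subtractf)

lemma herm_inner_add_left: "herm_inner (x + y) z = herm_inner x z + herm_inner y z"
  by (simp add: herm_inner_def algebra_simps sum.distrib)

lemma herm_inner_diff_left: "herm_inner (x - y) z = herm_inner x z - herm_inner y z"
  by (simp add: herm_inner_def algebra_simps sum_subtractf)

lemma herm_inner_smult_right: "herm_inner x (c *s y) = c * herm_inner x y"
  by (simp add: herm_inner_def sum_distrib_left mult_ac)

lemma herm_inner_smult_left: "herm_inner (c *s x) y = cnj c * herm_inner x y"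
  by (simp add: herm_inner_def sum_distrib_left mult_ac)

lemma herm_inner_zero_left [simp]: "herm_inner 0 x = 0"
  by (simp add: herm_inner_def)

lemma herm_inner_zero_right [simp]: "herm_inner x 0 = 0"
  by (simp add: herm_inner_def)

lemma Re_herm_inner: "Re (herm_inner x y) = inner x y"
  by (simp add: herm_inner_def inner_vec_def inner_complex_def)

lemma herm_inner_self: "herm_inner x x = of_real ((norm x)\<^sup>2)"
proof -
  have "herm_inner x x = (\<Sum>i\<in>UNIV. of_real ((norm (x$i))\<^sup>2))"
    unfolding herm_inner_def
    by (rule sum.cong) (simp_all add: complex_norm_square mult.commute del: of_real_power)
  also have "\<dots> = of_real ((norm x)\<^sup>2)"
    by (simp add: power2_norm_eq_inner inner_vec_def del: of_real_power)
  finally show ?thesis .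
qed

lemma herm_inner_self_adjoint:
  "self_adjoint A \<Longrightarrow> herm_inner x (A *v y) = herm_inner (A *v x) y"
  by (metis herm_inner_adj self_adjoint_def)

lemma herm_inner_self_adjoint_cnj:
  "self_adjoint A \<Longrightarrow> herm_inner x (A *v y) = cnj (herm_inner y (A *v x))"
  by (metis herm_inner_cnj herm_inner_self_adjoint)

lemma quad_form_real: "self_adjoint A \<Longrightarrow> quad_form A x = of_real (Re (quad_form A x))"
  by (metis Reals_cnj_iff complex_is_Real_iff herm_inner_self_adjoint_cnj of_real_Re)

lemma quad_form_add_vector: "quad_form A (x + c *s y) = quad_form A x + c * herm_inner x (A *v y)
    + cnj c * herm_inner y (A *v x) + cnj c * c * quad_form A y"
  by (simp add: matrix_vector_right_distrib mult_vec_smult herm_inner_add_left herm_inner_add_right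
      herm_inner_smult_left herm_inner_smult_right algebra_simps)

lemma quad_form_scale: "quad_form A (of_real r *s x) = of_real (r * r) * quad_form A x"
  by (simp add: mult_vec_smult herm_inner_smult_left herm_inner_smult_right)

lemma quad_form_add: "quad_form (A + B) x = quad_form A x + quad_form B x"
  by (simp add: matrix_vector_mult_add_rdistrib herm_inner_add_right)

lemma quad_form_diff: "quad_form (A - B) x = quad_form A x - quad_form B x"
  by (simp add: matrix_vector_mult_diff_rdistrib herm_inner_diff_right)

lemma quad_form_scaleR: "quad_form (r *\<^sub>R A) x = of_real r * quad_form A x"
  by (simp add: scaleR_mult_vec herm_inner_smult_right)

lemma quad_form_smat: "quad_form (smat z A) x = z * quad_form A x"
  by (simp add: smat_mult_vec herm_inner_smult_right)

lemma trace_mult_outer: "trace (A ** outer v v) = quad_form A v"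
proof -
  have "trace (A ** outer v v) = (\<Sum>i\<in>UNIV. \<Sum>j\<in>UNIV. A$i$j * v$j * cnj (v$i))"
    unfolding trace_def outer_def matrix_matrix_mult_def by (simp add: mult.assoc)
  also have "\<dots> = quad_form A v"
    unfolding herm_inner_def matrix_vector_mult_def
    by (simp add: sum_distrib_left mult.commute mult.left_commute)
  finally show ?thesis .
qed

lemma norm_quad_form_le:
  fixes A :: "'n::finite cmat"
  shows "cmod (quad_form A x) \<le> of_nat CARD('n)^2 * norm A * (norm x)\<^sup>2"
proof -
  have entry_le: "cmod (A $ i $ j) \<le> norm A" for i j
    by (meson Finite_Cartesian_Product.norm_nth_le order.trans)
  have component_le: "cmod (x $ j) \<le> norm x" for j
    by (rule Finite_Cartesian_Product.norm_nth_le)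
  have entry: "cmod (A $ i $ j * x $ j) \<le> norm A * norm x" for i j
    by (simp add: norm_mult mult_mono entry_le component_le)
  have row: "cmod (\<Sum>j\<in>UNIV. A $ i $ j * x $ j) \<le> (\<Sum>j\<in>(UNIV::'n set). norm A * norm x)" for i
    by (rule order.trans[OF norm_sum]) (rule sum_mono, rule entry)
  have "cmod (cnj (x $ i) * (\<Sum>j\<in>UNIV. A $ i $ j * x $ j))
      \<le> norm x * (\<Sum>j\<in>(UNIV::'n set). norm A * norm x)" for i
    unfolding norm_mult complex_mod_cnj
    by (rule mult_mono[OF component_le row]) auto
  moreover have "quad_form A x = (\<Sum>i\<in>UNIV. cnj (x$i) * (\<Sum>j\<in>UNIV. A$i$j * x$j))"
    by (simp add: herm_inner_def matrix_vector_mult_def)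
  ultimately have "cmod (quad_form A x) \<le> (\<Sum>i\<in>(UNIV::'n set). norm x * (\<Sum>j\<in>(UNIV::'n set). norm A * norm x))"
    by (metis (no_types, lifting) norm_sum order_trans sum_mono)
  also have "\<dots> = of_nat CARD('n)^2 * norm A * (norm x)\<^sup>2"
    by (simp add: power2_eq_square)
  finally show ?thesis .
qed

lemma continuous_on_Re_quad_form: "continuous_on S (\<lambda>x. Re (quad_form (A::'n::finite cmat) x))"
  unfolding Re_herm_inner
  by (intro continuous_intros linear_continuous_on matrix_vector_mul_bounded_linear)

lemma bounded_linear_Re_quad_form: "bounded_linear (\<lambda>X::'n::finite cmat. Re (quad_form X x))"
  by (rule linear_conv_bounded_linear[THEN iffD1], rule linearI) (simp_all add: quad_form_add quad_form_scaleR)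

lemma unit_vector_exists: "\<exists>u::complex^'n::finite. norm u = 1"
proof -
  obtain e :: "complex^'n" where "e \<noteq> 0" using zero_neq_one by blast
  then show ?thesis by (intro exI[of _ "(1 / norm e) *\<^sub>R e"]) simp
qed

lemma quad_form_attains_min_on_sphere:
  obtains x where "norm x = 1" "\<And>y. norm y = 1 \<Longrightarrow> Re (quad_form A x) \<le> Re (quad_form A y)"
proof -
  have "sphere (0::complex^'n) 1 \<noteq> {}" using unit_vector_exists by auto
  from continuous_attains_inf[OF compact_sphere this continuous_on_Re_quad_form] obtain x
    where "x \<in> sphere 0 1" "\<forall>y\<in>sphere 0 1. Re (quad_form A x) \<le> Re (quad_form A y)"
    by blast
  with that show ?thesis by simp
qed

lemma quad_form_attains_max_on_sphere:
  obtains x where "norm x = 1" "\<And>y. norm y = 1 \<Longrightarrow> Re (quad_form A y) \<le> Re (quad_form A x)"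
proof -
  have "sphere (0::complex^'n) 1 \<noteq> {}" using unit_vector_exists by auto
  from continuous_attains_sup[OF compact_sphere this continuous_on_Re_quad_form] obtain x
    where "x \<in> sphere 0 1" "\<forall>y\<in>sphere 0 1. Re (quad_form A y) \<le> Re (quad_form A x)"
    by blast
  with that show ?thesis by simp
qed

lemma Re_quad_form_nonneg_if_unit:
  assumes "\<And>u. norm u = 1 \<Longrightarrow> 0 \<le> Re (quad_form A u)"
  shows "0 \<le> Re (quad_form A y)"
proof (cases "y = 0")
  case False
  define u where "u = (1 / norm y) *\<^sub>R y"
  have "norm u = 1" using False by (simp add: u_def)
  moreover have "y = of_real (norm y) *s u"
    using False by (simp add: u_def scaleR_eq_of_real_smult[symmetric])
  then have "quad_form A y = of_real (norm y * norm y) * quad_form A u"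
    by (metis quad_form_scale)
  then have "Re (quad_form A y) = norm y * norm y * Re (quad_form A u)"
    by simp
  ultimately show ?thesis using assms by simp
qed simp

subsection \<open>Positive semidefinite matrices\<close>

lemma psd_kernel:
  assumes "psd A" "Re (quad_form A x) = 0"
  shows "A *v x = 0"
proof -
  have sa: "self_adjoint A" using assms(1) psd_def by blast
  define y where "y = A *v x"
  define a where "a = (norm y)\<^sup>2"
  define b where "b = Re (quad_form A y)"
  have b0: "b \<ge> 0" using assms(1) by (simp add: psd_def b_def)
  have hyx: "herm_inner y (A *v x) = of_real a" by (simp add: y_def a_def herm_inner_self)
  have hxy: "herm_inner x (A *v y) = of_real a"
    using herm_inner_self_adjoint_cnj[OF sa, of x y] hyx by simp
  have quadratic: "0 \<le> 2 * s * a + s * s * b" for s :: real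
  proof -
    have "0 \<le> Re (quad_form A (x + of_real s *s y))" using assms(1) by (simp add: psd_def)
    also have "\<dots> = 2 * s * a + s * s * b"
      unfolding quad_form_add_vector hyx hxy using assms(2) by (simp add: b_def)
    finally show ?thesis .
  qed
  have "a = 0"
  proof (rule ccontr)
    assume "a \<noteq> 0"
    then have a0: "a > 0" by (simp add: a_def)
    define s where "s = - a / (b + 1)"
    have "0 \<le> (b + 1) * (b + 1) * (2 * s * a + s * s * b)"
      using quadratic[of s] b0 by simp
    also have "(b + 1) * (b + 1) * (2 * s * a + s * s * b) = a * a * (- b - 2)"
    proof -
      have "(b + 1) * s = - a" using b0 by (simp add: s_def)
      then show ?thesis by algebra
    qed
    also have "\<dots> < 0" using a0 b0 by (simp add: mult_pos_neg)
    finally show False by simp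
  qed
  then show ?thesis by (simp add: a_def y_def)
qed

lemma Re_quad_form_le_max:
  assumes "norm v = 1" and "\<And>y. norm y = 1 \<Longrightarrow> Re (quad_form R y) \<le> Re (quad_form R v)"
  shows "Re (quad_form R y) \<le> Re (quad_form R v) * (norm y)\<^sup>2"
proof -
  have "0 \<le> Re (quad_form (Re (quad_form R v) *\<^sub>R mat 1 - R) y)"
    by (rule Re_quad_form_nonneg_if_unit) (simp add: quad_form_diff quad_form_scaleR herm_inner_self assms(2))
  then show ?thesis by (simp add: quad_form_diff quad_form_scaleR herm_inner_self)
qed

text \<open>First-order optimality of the Rayleigh quotient: perturbing the maximiser \<open>v\<close> in the
  direction of the residual \<open>R v - l v\<close> would increase the quotient.\<close>

lemma Rayleigh_maximizer_is_eigenvector: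
  assumes sa: "self_adjoint R" and nv: "norm v = 1"
    and vmax: "\<And>y. norm y = 1 \<Longrightarrow> Re (quad_form R y) \<le> Re (quad_form R v)"
  shows "R *v v = of_real (Re (quad_form R v)) *s v"
proof -
  define l where "l = Re (quad_form R v)"
  have bound: "Re (quad_form R y) \<le> l * (norm y)\<^sup>2" for y
    unfolding l_def by (rule Re_quad_form_le_max[OF nv vmax])
  define u where "u = R *v v - of_real l *s v"
  define a where "a = (norm u)\<^sup>2"
  have hvv: "herm_inner v v = 1" using nv by (simp add: herm_inner_self)
  have qv: "quad_form R v = of_real l" using quad_form_real[OF sa, of v] l_def by simp
  have hvu: "herm_inner v u = 0"
    by (simp add: u_def herm_inner_diff_right herm_inner_smult_right hvv qv)
  have huv: "herm_inner u v = 0" using hvu herm_inner_cnj by (metis complex_cnj_zero)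
  have huRv: "herm_inner u (R *v v) = of_real a"
  proof -
    have "R *v v = u + of_real l *s v" by (simp add: u_def)
    then show ?thesis
      by (simp add: herm_inner_add_right herm_inner_smult_right huv herm_inner_self a_def)
  qed
  have perturbed: "l + 2 * s * a + s * s * Re (quad_form R u) \<le> l * (1 + s * s * a)" for s
  proof -
    have "herm_inner v (R *v u) = of_real a"
      using herm_inner_self_adjoint_cnj[OF sa, of v u] huRv by simp
    then have expanded: "Re (quad_form R (v + of_real s *s u)) = l + 2 * s * a + s * s * Re (quad_form R u)"
      unfolding quad_form_add_vector using qv huRv by simp
    have "herm_inner (v + of_real s *s u) (v + of_real s *s u) = herm_inner v v
        + of_real s * herm_inner v u + of_real s * herm_inner u v + of_real s * of_real s * herm_inner u u"
      by (simp add: herm_inner_add_left herm_inner_add_right herm_inner_smult_left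
          herm_inner_smult_right algebra_simps)
    also have "\<dots> = of_real (1 + s * s * a)"
      by (simp add: hvv hvu huv herm_inner_self a_def nv)
    finally have "(norm (v + of_real s *s u))\<^sup>2 = 1 + s * s * a"
      unfolding herm_inner_self of_real_eq_iff .
    with expanded show ?thesis using bound[of "v + of_real s *s u"] by simp
  qed
  have "a = 0"
  proof (rule ccontr)
    assume "a \<noteq> 0"
    then have a0: "a > 0" by (simp add: a_def)
    define C where "C = \<bar>l * a - Re (quad_form R u)\<bar> + 1"
    define s where "s = a / C"
    have C1: "C \<ge> 1" by (simp add: C_def)
    have s0: "s > 0" using a0 C1 by (simp add: s_def)
    have "2 * s * a \<le> s * s * (l * a - Re (quad_form R u))"
      using perturbed[of s] by (simp add: algebra_simps)
    also have "\<dots> \<le> s * s * C" using s0 by (intro mult_left_mono) (auto simp: C_def)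
    also have "\<dots> = s * a" using C1 by (simp add: s_def)
    finally show False using s0 a0 by (simp add: mult_le_cancel_left)
  qed
  then show ?thesis by (simp add: u_def a_def l_def)
qed

lemma psd_nonzero_has_positive_eigenvalue:
  assumes R: "psd R" and "R \<noteq> 0"
  obtains v l where "norm v = 1" "l > 0" "R *v v = of_real l *s v"
proof -
  obtain v where nv: "norm v = 1"
    and vmax: "\<And>y. norm y = 1 \<Longrightarrow> Re (quad_form R y) \<le> Re (quad_form R v)"
    using quad_form_attains_max_on_sphere by blast
  obtain y where "R *v y \<noteq> 0" using assms(2) matrix_eq[of R 0] by auto
  then have "0 < Re (quad_form R y)"
    using psd_kernel[OF R] R by (metis psd_def order_le_less)
  moreover have "Re (quad_form R y) \<le> Re (quad_form R v) * (norm y)\<^sup>2"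
    by (rule Re_quad_form_le_max[OF nv vmax])
  ultimately have "0 < Re (quad_form R v)"
    by (metis mult_nonpos_nonneg not_le order_le_less_trans zero_le_power2)
  with that nv Rayleigh_maximizer_is_eigenvector[OF _ nv vmax] R show ?thesis
    by (simp add: psd_def)
qed

lemma psd_remove_eigenvector:
  assumes R: "psd R" and nv: "norm v = 1" and Rv: "R *v v = of_real l *s v"
  shows "psd (R - l *\<^sub>R outer v v)"
proof -
  have saR: "self_adjoint R" using R psd_def by blast
  have hvv: "herm_inner v v = 1" using nv by (simp add: herm_inner_self)
  have "quad_form (R - l *\<^sub>R outer v v) x = quad_form R (x - herm_inner v x *s v)" for x
  proof -
    define \<alpha> where "\<alpha> = herm_inner v x"
    define w where "w = x - \<alpha> *s v"
    have hxv: "herm_inner x v = cnj \<alpha>" using herm_inner_cnj[of v x] by (simp add: \<alpha>_def)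
    have hwv: "herm_inner w v = 0"
      by (simp add: w_def herm_inner_diff_left herm_inner_smult_left hxv hvv)
    have hvw: "herm_inner v w = 0"
      by (simp add: w_def herm_inner_diff_right herm_inner_smult_right \<alpha>_def hvv)
    have "quad_form R x = quad_form R (w + \<alpha> *s v)" by (simp add: w_def)
    also have "\<dots> = quad_form R w + cnj \<alpha> * \<alpha> * of_real l"
      unfolding quad_form_add_vector
      by (simp add: Rv herm_inner_smult_right hwv herm_inner_self_adjoint[OF saR]
          herm_inner_smult_left hvw hvv)
    finally show ?thesis
      by (simp add: matrix_vector_mult_diff_rdistrib scaleR_mult_vec outer_mult_vec
          herm_inner_diff_right herm_inner_smult_right hxv w_def \<alpha>_def algebra_simps)
  qed
  moreover have "self_adjoint (R - l *\<^sub>R outer v v)"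
    using saR by (simp add: self_adjoint_def adj_diff adj_scaleR adj_outer_self)
  ultimately show ?thesis using R by (simp add: psd_def)
qed

lemma range_remove_eigenvector_psubset:
  assumes sa: "self_adjoint R" and nv: "norm v = 1" and Rv: "R *v v = of_real l *s v" and "l \<noteq> 0"
  shows "range ((*v) (R - l *\<^sub>R outer v v)) \<subset> range ((*v) R)"
proof -
  define R' where "R' = R - l *\<^sub>R outer v v"
  have hvv: "herm_inner v v = 1" using nv by (simp add: herm_inner_self)
  have R'x: "R' *v x = R *v x - of_real l *s (herm_inner v x *s v)" for x
    by (simp add: R'_def matrix_vector_mult_diff_rdistrib scaleR_mult_vec outer_mult_vec)
  have "R' *v y = R *v (y - herm_inner v y *s v)" for y
    by (simp add: R'x matrix_vector_mult_diff_distrib mult_vec_smult Rv vec_eq_iff mult_ac)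
  then have "range ((*v) R') \<subseteq> range ((*v) R)" by auto
  moreover have "v = R *v (of_real (1 / l) *s v)"
    using assms(4) by (simp add: mult_vec_smult Rv vec_eq_iff)
  moreover have "v \<notin> range ((*v) R')"
  proof
    assume "v \<in> range ((*v) R')"
    then obtain y where y: "v = R' *v y" by blast
    have "self_adjoint R'"
      using sa by (simp add: R'_def self_adjoint_def adj_diff adj_scaleR adj_outer_self)
    then have "herm_inner v v = herm_inner y (R' *v v)"
      using herm_inner_self_adjoint y by metis
    then show False by (simp add: R'x Rv hvv)
  qed
  ultimately show ?thesis unfolding R'_def by blast
qed

text \<open>Peel off one eigenvector of \<open>R\<close> at a time; the rank of \<open>R\<close> drops at each step.\<close>

lemma psd_trace_nonneg:
  assumes A: "psd A" and R: "psd R"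
  shows "0 \<le> Re (trace (A ** R))"
  using R
proof (induction "dim (range ((*v) R))" arbitrary: R rule: less_induct)
  case less
  show ?case
  proof (cases "R = 0")
    case False
    obtain v l where nv: "norm v = 1" and l0: "l > 0" and Rv: "R *v v = of_real l *s v"
      using psd_nonzero_has_positive_eigenvalue[OF less.prems False] by blast
    define R' where "R' = R - l *\<^sub>R outer v v"
    have psdR': "psd R'" unfolding R'_def by (rule psd_remove_eigenvector[OF less.prems nv Rv])
    have "range ((*v) R') \<subset> range ((*v) R)" unfolding R'_def
      using range_remove_eigenvector_psubset[OF _ nv Rv] less.prems l0 by (simp add: psd_def)
    moreover have "subspace (range ((*v) M))" for M :: "'a cmat"
      by (rule linear_subspace_image[OF matrix_vector_mul_linear subspace_UNIV])
    ultimately have "dim (range ((*v) R')) < dim (range ((*v) R))"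
      by (metis dim_psubset span_eq_iff)
    then have "0 \<le> Re (trace (A ** R'))" using less.hyps psdR' by blast
    moreover have "trace (A ** R) = trace (A ** R') + of_real l * quad_form A v"
      by (simp add: R'_def matrix_diff_ldistrib trace_sub scaleR_matrix_mult_right trace_scaleR
          trace_mult_outer)
    moreover have "0 \<le> Re (quad_form A v)" using A psd_def by blast
    ultimately show ?thesis using l0 by simp
  qed (simp add: trace_def)
qed

lemma psd_congruence: "psd A \<Longrightarrow> psd (adj M ** A ** M)"
proof -
  assume A: "psd A"
  have "self_adjoint (adj M ** A ** M)"
    using A by (simp add: psd_def self_adjoint_def adj_mult matrix_mul_assoc)
  moreover have "quad_form (adj M ** A ** M) x = quad_form A (M *v x)" for x
    by (simp add: matrix_vector_mul_assoc[symmetric] herm_inner_adj)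
  ultimately show ?thesis using A by (simp add: psd_def)
qed

lemma psd_mat1: "psd (mat 1)"
  by (simp add: psd_def self_adjoint_def herm_inner_self)

lemma psd_norm_bound_minus:
  assumes "self_adjoint A"
  shows "psd ((of_nat CARD('n)^2 * norm A) *\<^sub>R mat 1 - (A::'n::finite cmat))"
proof -
  have "Re (quad_form A y) \<le> of_nat CARD('n)^2 * norm A * (norm y)\<^sup>2" for y
    using abs_Re_le_cmod[of "quad_form A y"] norm_quad_form_le[of y A] by simp
  then show ?thesis
    using assms by (simp add: psd_def self_adjoint_def adj_diff adj_scaleR quad_form_diff
        quad_form_scaleR herm_inner_self)
qed

lemma quadratic_nonneg_imp_le:
  fixes a B c :: real
  assumes "\<And>s. 0 \<le> a - 2 * s * B + s * s * B * c" "c \<ge> 0" "a \<ge> 0" "B \<ge> 0"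
  shows "B \<le> a * c"
proof (cases "c = 0")
  case True
  have "B \<le> 0"
  proof (rule ccontr)
    assume "\<not> B \<le> 0"
    then have "a - 2 * ((a + 1) / (2 * B)) * B = -1" by (simp add: field_simps)
    then show False using assms(1)[of "(a + 1) / (2 * B)"] True by simp
  qed
  then show ?thesis using True assms by simp
next
  case False
  then have c0: "c > 0" using assms(2) by simp
  have "0 \<le> a - 2 * (1/c) * B + (1/c) * (1/c) * B * c" by (rule assms(1))
  then have "0 \<le> a - B / c" using c0 by (simp add: field_simps)
  then show ?thesis using c0 by (simp add: field_simps)
qed

text \<open>Cauchy--Schwarz for the semi-inner product \<open>(X, Y) \<mapsto> tr(X\<^sup>* A Y \<rho>)\<close>, applied to
  \<open>X = I\<close>: expand the nonnegative trace of \<open>(I + zY)\<^sup>* A (I + zY) \<rho>\<close> in \<open>z\<close>.\<close>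

lemma trace_Cauchy_Schwarz:
  assumes A: "psd A" and P: "psd \<rho>"
  shows "(cmod (trace (A ** Y ** \<rho>)))\<^sup>2 \<le> Re (trace (A ** \<rho>)) * Re (trace (adj Y ** A ** Y ** \<rho>))"
proof -
  define b where "b = trace (A ** Y ** \<rho>)"
  define a where "a = Re (trace (A ** \<rho>))"
  define c where "c = Re (trace (adj Y ** A ** Y ** \<rho>))"
  have "adj A = A" "adj \<rho> = \<rho>" using A P by (simp_all add: psd_def self_adjoint_def)
  then have "cnj (trace (adj Y ** A ** \<rho>)) = trace (\<rho> ** (A ** Y))"
    by (simp add: trace_adj[symmetric] adj_mult matrix_mul_assoc)
  then have tb: "trace (adj Y ** A ** \<rho>) = cnj b"
    unfolding b_def by (metis complex_cnj_cnj trace_mul_sym)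
  have expand: "0 \<le> a + 2 * Re (z * b) + (cmod z)\<^sup>2 * c" for z
  proof -
    define M where "M = mat 1 + smat z Y"
    have "0 \<le> Re (trace (adj M ** A ** M ** \<rho>))"
      by (rule psd_trace_nonneg[OF psd_congruence[OF A] P])
    also have "trace (adj M ** A ** M ** \<rho>) = trace (A ** \<rho>) + z * b
        + cnj z * trace (adj Y ** A ** \<rho>) + cnj z * z * trace (adj Y ** A ** Y ** \<rho>)"
      by (simp add: M_def adj_add adj_smat matrix_add_ldistrib matrix_add_rdistrib' smat_mult_left
          smat_mult_right trace_add trace_smat b_def) (simp add: algebra_simps)
    also have "cnj z * z = of_real ((cmod z)\<^sup>2)"
      using complex_norm_square[of z] by (simp add: mult.commute)
    finally show ?thesis unfolding tb a_def c_def by (simp add: mult.commute)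
  qed
  have a0: "a \<ge> 0" unfolding a_def by (rule psd_trace_nonneg[OF A P])
  have c0: "c \<ge> 0" unfolding c_def by (rule psd_trace_nonneg[OF psd_congruence[OF A] P])
  have "0 \<le> a - 2 * s * (cmod b)\<^sup>2 + s * s * (cmod b)\<^sup>2 * c" for s
  proof -
    have "0 \<le> a + 2 * Re ((- of_real s * cnj b) * b) + (cmod (- of_real s * cnj b))\<^sup>2 * c"
      by (rule expand)
    also have "Re ((- of_real s * cnj b) * b) = - s * (cmod b)\<^sup>2"
      by (simp add: mult.assoc complex_norm_square[symmetric] mult.commute[of "cnj b"] del: of_real_power)
    also have "(cmod (- of_real s * cnj b))\<^sup>2 = s * s * (cmod b)\<^sup>2"
      by (simp add: norm_mult power_mult_distrib power2_eq_square)
    finally show ?thesis by (simp add: algebra_simps)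
  qed
  then show ?thesis
    using quadratic_nonneg_imp_le c0 a0 by (simp add: a_def b_def c_def)
qed

subsection \<open>Differential inequalities on the half-line\<close>

lemma has_real_derivative_at_if_pos:
  assumes "(f has_real_derivative D) (at t within {0..})" "t > 0"
  shows "(f has_real_derivative D) (at t)"
proof -
  have "(f has_real_derivative D) (at t within {0<..})"
    by (rule has_field_derivative_subset[OF assms(1)]) auto
  moreover have "at t within {0<..} = at t" using assms(2) by (intro at_within_open) auto
  ultimately show ?thesis by simp
qed

lemma nondecreasing_if_derivative_nonneg:
  fixes f :: "real \<Rightarrow> real"
  assumes d: "\<And>t. t \<ge> 0 \<Longrightarrow> (f has_real_derivative f' t) (at t within {0..})"
    and pos: "\<And>t. t > 0 \<Longrightarrow> f' t \<ge> 0"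
    and "0 \<le> a" "a \<le> b"
  shows "f a \<le> f b"
proof (rule DERIV_nonneg_imp_increasing_open[OF \<open>a \<le> b\<close>])
  fix x assume "a < x" "x < b"
  then have x: "x > 0" using \<open>0 \<le> a\<close> by simp
  then have "(f has_real_derivative f' x) (at x)"
    using has_real_derivative_at_if_pos[OF d[OF less_imp_le[OF x]] x] by simp
  then show "\<exists>y. (f has_real_derivative y) (at x) \<and> 0 \<le> y" using pos[OF x] by blast
next
  have "continuous_on {0..} f"
    unfolding continuous_on_eq_continuous_within by (auto intro: DERIV_continuous[OF d])
  then show "continuous_on {a..b} f" by (rule continuous_on_subset) (use \<open>0 \<le> a\<close> in auto)
qed

text \<open>Gronwall: \<open>exp (-K s) \<parallel>Y s\<parallel>\<^sup>2\<close> is nonincreasing once \<open>K\<close> dominates twice the norm of \<open>F\<close>.\<close>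

lemma linear_ode_zero_solution:
  fixes F :: "'a::real_inner \<Rightarrow> 'a" and Y :: "real \<Rightarrow> 'a"
  assumes "bounded_linear F"
    and d: "\<And>t. t \<ge> 0 \<Longrightarrow> (Y has_vector_derivative F (Y t)) (at t within {0..})"
    and "Y 0 = 0" "t \<ge> 0"
  shows "Y t = 0"
proof -
  obtain C where C: "\<And>Z. norm (F Z) \<le> norm Z * C"
    using bounded_linear.bounded[OF assms(1)] by blast
  define K where "K = 2 * \<bar>C\<bar>"
  define \<phi> where "\<phi> s = exp (- K * s) * (Y s \<bullet> Y s)" for s
  define \<phi>' where "\<phi>' s = exp (- K * s) * (2 * (Y s \<bullet> F (Y s)) - K * (Y s \<bullet> Y s))" for s
  have der: "((\<lambda>s. - \<phi> s) has_real_derivative - \<phi>' s) (at s within {0..})" if "s \<ge> 0" for s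
  proof -
    have "((\<lambda>s. Y s \<bullet> Y s) has_vector_derivative (Y s \<bullet> F (Y s) + F (Y s) \<bullet> Y s)) (at s within {0..})"
      by (rule bounded_bilinear.has_vector_derivative[OF bounded_bilinear_inner d[OF that] d[OF that]])
    then have i: "((\<lambda>s. Y s \<bullet> Y s) has_real_derivative (2 * (Y s \<bullet> F (Y s)))) (at s within {0..})"
      by (simp add: has_real_derivative_iff_has_vector_derivative inner_commute)
    have e: "((\<lambda>s. exp (- K * s)) has_real_derivative exp (- K * s) * (- K)) (at s within {0..})"
      by (auto intro!: derivative_eq_intros)
    have "(\<phi> has_real_derivative exp (- K * s) * (- K) * (Y s \<bullet> Y s) + exp (- K * s) * (2 * (Y s \<bullet> F (Y s))))
        (at s within {0..})"
      unfolding \<phi>_def using DERIV_mult[OF e i] by (simp add: mult.commute)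
    moreover have "exp (- K * s) * (- K) * (Y s \<bullet> Y s) + exp (- K * s) * (2 * (Y s \<bullet> F (Y s))) = \<phi>' s"
      by (simp add: \<phi>'_def algebra_simps)
    ultimately show ?thesis using DERIV_minus by fastforce
  qed
  have nonneg: "- \<phi>' s \<ge> 0" for s
  proof -
    have "Y s \<bullet> F (Y s) \<le> norm (Y s) * norm (F (Y s))"
      using Cauchy_Schwarz_ineq2[of "Y s" "F (Y s)"] by simp
    also have "\<dots> \<le> norm (Y s) * (norm (Y s) * C)" by (rule mult_left_mono[OF C norm_ge_zero])
    also have "\<dots> \<le> norm (Y s) * (norm (Y s) * \<bar>C\<bar>)" by (intro mult_left_mono) auto
    also have "\<dots> = \<bar>C\<bar> * (Y s \<bullet> Y s)"
      by (simp add: power2_norm_eq_inner[symmetric] power2_eq_square)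
    finally have "2 * (Y s \<bullet> F (Y s)) - K * (Y s \<bullet> Y s) \<le> 0" by (simp add: K_def)
    then show ?thesis unfolding \<phi>'_def by (simp add: mult_nonneg_nonpos)
  qed
  have "- \<phi> 0 \<le> - \<phi> t"
    by (rule nondecreasing_if_derivative_nonneg[OF der nonneg]) (use \<open>t \<ge> 0\<close> in auto)
  then have "Y t \<bullet> Y t \<le> 0" using \<open>Y 0 = 0\<close> by (simp add: \<phi>_def mult_le_0_iff)
  then show ?thesis by (metis inner_gt_zero_iff not_le)
qed

subsection \<open>Invariance of the positive semidefinite cone\<close>

lemma Re_quad_form_uniformly_continuous:
  fixes \<sigma> :: "'a::metric_space \<Rightarrow> 'n::finite cmat"
  assumes "continuous (at T within S) \<sigma>" "e > 0"
  obtains \<delta> where "\<delta> > 0" "\<And>s y. s \<in> S \<Longrightarrow> dist s T < \<delta> \<Longrightarrow> norm y = 1 \<Longrightarrow>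
    \<bar>Re (quad_form (\<sigma> s) y) - Re (quad_form (\<sigma> T) y)\<bar> < e"
proof -
  define n2 where "n2 = (of_nat CARD('n)^2 :: real)"
  have n2: "n2 + 1 > 0" by (simp add: n2_def add_nonneg_pos)
  then have "e / (n2 + 1) > 0" using assms(2) by simp
  moreover have "\<forall>e>0. \<exists>d>0. \<forall>s\<in>S. dist s T < d \<longrightarrow> dist (\<sigma> s) (\<sigma> T) < e"
    using assms(1) by (simp add: continuous_within_eps_delta)
  ultimately obtain \<delta> where \<delta>: "\<delta> > 0" "\<forall>s\<in>S. dist s T < \<delta> \<longrightarrow> dist (\<sigma> s) (\<sigma> T) < e / (n2 + 1)"
    by blast
  have "\<bar>Re (quad_form (\<sigma> s) y) - Re (quad_form (\<sigma> T) y)\<bar> < e"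
    if "s \<in> S" "dist s T < \<delta>" "norm y = 1" for s y
  proof -
    have "\<bar>Re (quad_form (\<sigma> s) y) - Re (quad_form (\<sigma> T) y)\<bar> \<le> n2 * norm (\<sigma> s - \<sigma> T)"
      using abs_Re_le_cmod[of "quad_form (\<sigma> s - \<sigma> T) y"] norm_quad_form_le[of y "\<sigma> s - \<sigma> T"] that(3)
      by (simp add: quad_form_diff n2_def)
    also have "\<dots> \<le> (n2 + 1) * norm (\<sigma> s - \<sigma> T)" by (simp add: distrib_right)
    also have "\<dots> < e"
      using \<delta>(2) that(1,2) n2 by (simp add: dist_norm pos_less_divide_eq mult.commute)
    finally show ?thesis .
  qed
  with \<delta>(1) that show ?thesis by blast
qed

lemma first_touching_time:
  fixes \<sigma> :: "real \<Rightarrow> 'n::finite cmat"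
  assumes cont: "continuous_on {0..} \<sigma>"
    and init: "\<And>y. norm y = 1 \<Longrightarrow> 0 < Re (quad_form (\<sigma> 0) y)"
    and "t \<ge> 0" "norm x = 1" "Re (quad_form (\<sigma> t) x) \<le> 0"
  obtains T x0 where "T > 0" "norm x0 = 1" "Re (quad_form (\<sigma> T) x0) = 0"
    "\<And>y. norm y = 1 \<Longrightarrow> 0 \<le> Re (quad_form (\<sigma> T) y)"
    "\<And>s y. 0 \<le> s \<Longrightarrow> s < T \<Longrightarrow> norm y = 1 \<Longrightarrow> 0 < Re (quad_form (\<sigma> s) y)"
proof -
  define q where "q s y = Re (quad_form (\<sigma> s) y)" for s y
  define S where "S = {s. 0 \<le> s \<and> (\<exists>y. norm y = 1 \<and> q s y \<le> 0)}"
  define T where "T = Inf S"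
  have tS: "t \<in> S" using assms(3-5) by (auto simp: S_def q_def)
  have bdd: "bdd_below S" by (rule bdd_belowI[of _ 0]) (auto simp: S_def)
  have T0: "0 \<le> T" unfolding T_def using tS by (intro cInf_greatest) (auto simp: S_def)
  have below: "0 < q s y" if "0 \<le> s" "s < T" "norm y = 1" for s y
    using cInf_lower[OF _ bdd, of s] that by (force simp: S_def T_def)
  have near: "\<exists>\<delta>>0. \<forall>s y. 0 \<le> s \<longrightarrow> \<bar>s - T\<bar> < \<delta> \<longrightarrow> norm y = 1 \<longrightarrow> \<bar>q s y - q T y\<bar> < e"
    if "e > 0" for e
    using Re_quad_form_uniformly_continuous[OF cont[unfolded continuous_on_eq_continuous_within,
        rule_format, of T] that] T0 unfolding q_def dist_real_def by (metis atLeast_iff)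
  obtain x0 where nx0: "norm x0 = 1" and x0min: "\<And>y. norm y = 1 \<Longrightarrow> q T x0 \<le> q T y"
    unfolding q_def using quad_form_attains_min_on_sphere by blast
  have nonneg: "0 \<le> q T y" if y: "norm y = 1" for y
  proof (cases "T = 0")
    case True then show ?thesis using init[OF y] by (simp add: q_def)
  next
    case False
    show ?thesis
    proof (rule ccontr)
      assume "\<not> ?thesis"
      then obtain \<delta> where \<delta>: "\<delta> > 0" "\<And>s. 0 \<le> s \<Longrightarrow> \<bar>s - T\<bar> < \<delta> \<Longrightarrow> \<bar>q s y - q T y\<bar> < - q T y"
        using near[of "- q T y"] y by force
      define s where "s = T - min \<delta> T / 2"
      have "0 \<le> s" "s < T" "\<bar>s - T\<bar> < \<delta>" using \<delta>(1) False T0 by (auto simp: s_def min_def)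
      then show False using \<delta>(2) below[OF _ _ y] by fastforce
    qed
  qed
  have "q T x0 \<le> 0"
  proof (rule ccontr)
    assume "\<not> ?thesis"
    then obtain \<delta> where \<delta>: "\<delta> > 0"
      "\<And>s y. 0 \<le> s \<Longrightarrow> \<bar>s - T\<bar> < \<delta> \<Longrightarrow> norm y = 1 \<Longrightarrow> \<bar>q s y - q T y\<bar> < q T x0"
      using near[of "q T x0"] by force
    have "T + \<delta> \<le> s" if sS: "s \<in> S" for s
    proof (rule ccontr)
      assume "\<not> T + \<delta> \<le> s"
      moreover obtain y where "norm y = 1" "q s y \<le> 0" "s \<ge> 0" using sS by (auto simp: S_def)
      moreover have "T \<le> s" unfolding T_def by (rule cInf_lower[OF sS bdd])
      ultimately show False using \<delta>(2)[of s y] x0min[of y] by force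
    qed
    then have "T + \<delta> \<le> T" unfolding T_def using tS by (metis cInf_greatest empty_iff)
    then show False using \<delta>(1) by simp
  qed
  then have "q T x0 = 0" using nonneg[OF nx0] by simp
  moreover have "T \<noteq> 0" using init[OF nx0] \<open>q T x0 \<le> 0\<close> by (auto simp: q_def)
  ultimately show ?thesis using that[of T x0] T0 nx0 nonneg below by (simp add: q_def)
qed

lemma positive_definite_flow_barrier:
  fixes \<sigma> \<sigma>' :: "real \<Rightarrow> 'n::finite cmat"
  assumes deriv: "\<And>t. t \<ge> 0 \<Longrightarrow> (\<sigma> has_vector_derivative \<sigma>' t) (at t within {0..})"
    and herm: "\<And>t. t \<ge> 0 \<Longrightarrow> self_adjoint (\<sigma> t)"
    and init: "\<And>y. norm y = 1 \<Longrightarrow> 0 < Re (quad_form (\<sigma> 0) y)"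
    and inward: "\<And>T x. T > 0 \<Longrightarrow> psd (\<sigma> T) \<Longrightarrow> \<sigma> T *v x = 0 \<Longrightarrow> norm x = 1 \<Longrightarrow>
      0 < Re (quad_form (\<sigma>' T) x)"
    and "t \<ge> 0" "norm x = 1"
  shows "0 < Re (quad_form (\<sigma> t) x)"
proof (rule ccontr)
  assume "\<not> ?thesis"
  then have touch: "Re (quad_form (\<sigma> t) x) \<le> 0" by simp
  have cont: "continuous_on {0..} \<sigma>"
    unfolding continuous_on_eq_continuous_within
    by (auto intro: has_vector_derivative_continuous[OF deriv])
  show False
  proof (rule first_touching_time[OF cont init assms(5,6) touch])
    fix T x0
    assume T: "T > 0" and nx0: "norm x0 = 1" and zero: "Re (quad_form (\<sigma> T) x0) = 0"
      and nonneg: "\<And>y. norm y = 1 \<Longrightarrow> 0 \<le> Re (quad_form (\<sigma> T) y)"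
      and before: "\<And>s y. 0 \<le> s \<Longrightarrow> s < T \<Longrightarrow> norm y = 1 \<Longrightarrow> 0 < Re (quad_form (\<sigma> s) y)"
    have "psd (\<sigma> T)"
      using herm T Re_quad_form_nonneg_if_unit[OF nonneg] by (simp add: psd_def)
    then have "0 < Re (quad_form (\<sigma>' T) x0)"
      using inward T nx0 psd_kernel zero by blast
    define \<gamma> where "\<gamma> s = Re (quad_form (\<sigma> s) x0)" for s
    have "(\<gamma> has_real_derivative Re (quad_form (\<sigma>' T) x0)) (at T within {0..})"
      unfolding \<gamma>_def has_real_derivative_iff_has_vector_derivative
      by (rule bounded_linear.has_vector_derivative[OF bounded_linear_Re_quad_form deriv]) (use T in simp)
    then have "(\<gamma> has_real_derivative Re (quad_form (\<sigma>' T) x0)) (at T)"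
      using T by (rule has_real_derivative_at_if_pos)
    from DERIV_pos_inc_left[OF this \<open>0 < Re (quad_form (\<sigma>' T) x0)\<close>]
    obtain d where d: "d > 0" and decreasing: "\<And>h. h > 0 \<Longrightarrow> h < d \<Longrightarrow> \<gamma> (T - h) < \<gamma> T"
      by blast
    define h where "h = min d T / 2"
    have h: "h > 0" "h < d" "0 \<le> T - h" "T - h < T" using d T by (auto simp: h_def min_def)
    have "\<gamma> (T - h) < 0" using decreasing[OF h(1,2)] zero by (simp add: \<gamma>_def)
    moreover have "0 < \<gamma> (T - h)" unfolding \<gamma>_def by (rule before[OF h(3,4) nx0])
    ultimately show False by simp
  qed
qed

text \<open>The shift \<open>\<rho> + \<epsilon> e\<^bsup>K s\<^esup> I\<close> starts in the interior of the cone, and once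
  \<open>K\<close> bounds the quadratic form of \<open>F(I)\<close> its velocity points strictly inward at the boundary.\<close>

lemma psd_invariant_linear_flow:
  fixes F :: "'n::finite cmat \<Rightarrow> 'n cmat"
  assumes lin: "linear F"
    and inward: "\<And>Q x. psd Q \<Longrightarrow> Q *v x = 0 \<Longrightarrow> 0 \<le> Re (quad_form (F Q) x)"
    and deriv: "\<And>t. t \<ge> 0 \<Longrightarrow> (\<rho> has_vector_derivative F (\<rho> t)) (at t within {0..})"
    and herm: "\<And>t. t \<ge> 0 \<Longrightarrow> self_adjoint (\<rho> t)"
    and init: "psd (\<rho> 0)" and "t \<ge> 0"
  shows "psd (\<rho> t)"
proof -
  define K where "K = of_nat CARD('n)^2 * norm (F (mat 1)) + 1"
  have shifted: "0 < Re (quad_form (\<rho> t) x) + \<epsilon> * exp (K * t)" if "\<epsilon> > 0" "norm x = 1" for \<epsilon> x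
  proof -
    define \<sigma> where "\<sigma> s = \<rho> s + (\<epsilon> * exp (K * s)) *\<^sub>R mat 1" for s
    have q\<sigma>: "Re (quad_form (\<sigma> s) y) = Re (quad_form (\<rho> s) y) + \<epsilon> * exp (K * s)"
      if "norm y = 1" for s y
      using that by (simp add: \<sigma>_def quad_form_add quad_form_scaleR herm_inner_self)
    have "0 < Re (quad_form (\<sigma> t) x)"
    proof (rule positive_definite_flow_barrier[where \<sigma>'="\<lambda>s. F (\<rho> s) + (\<epsilon> * exp (K * s) * K) *\<^sub>R mat 1"])
      fix s :: real assume s: "s \<ge> 0"
      have "((\<lambda>s. (\<epsilon> * exp (K * s)) *\<^sub>R mat 1) has_vector_derivative (\<epsilon> * exp (K * s) * K) *\<^sub>R mat 1)
          (at s within {0..})"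
        using has_vector_derivative_scaleR[OF _ has_vector_derivative_const]
        by (auto intro!: derivative_eq_intros)
      then show "(\<sigma> has_vector_derivative F (\<rho> s) + (\<epsilon> * exp (K * s) * K) *\<^sub>R mat 1) (at s within {0..})"
        unfolding \<sigma>_def by (rule has_vector_derivative_add[OF deriv[OF s]])
      show "self_adjoint (\<sigma> s)"
        using herm[OF s] by (simp add: \<sigma>_def self_adjoint_def adj_add adj_scaleR)
    next
      fix y :: "complex^'n" assume "norm y = 1"
      then show "0 < Re (quad_form (\<sigma> 0) y)" using init \<open>\<epsilon> > 0\<close> q\<sigma> by (simp add: psd_def add_nonneg_pos)
    next
      fix T :: real and y :: "complex^'n"
      assume T: "T > 0" and boundary: "psd (\<sigma> T)" "\<sigma> T *v y = 0" and y: "norm y = 1"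
      have "0 \<le> Re (quad_form (F (\<sigma> T)) y)" using boundary by (rule inward)
      moreover have "Re (quad_form (F (mat 1)) y) < K"
        using abs_Re_le_cmod[of "quad_form (F (mat 1)) y"] norm_quad_form_le[of y "F (mat 1)"] y
        by (simp add: K_def)
      moreover have F\<rho>: "F (\<rho> T) = F (\<sigma> T) - (\<epsilon> * exp (K * T)) *\<^sub>R F (mat 1)"
        by (simp add: \<sigma>_def linear_add[OF lin] linear_cmul[OF lin])
      have "Re (quad_form (F (\<rho> T) + (\<epsilon> * exp (K * T) * K) *\<^sub>R mat 1) y)
          = Re (quad_form (F (\<sigma> T)) y) + \<epsilon> * exp (K * T) * (K - Re (quad_form (F (mat 1)) y))"
        unfolding F\<rho> quad_form_add quad_form_diff quad_form_scaleR
        using y by (simp add: herm_inner_self algebra_simps)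
      ultimately show "0 < Re (quad_form (F (\<rho> T) + (\<epsilon> * exp (K * T) * K) *\<^sub>R mat 1) y)"
        using \<open>\<epsilon> > 0\<close> by (simp add: add_nonneg_pos)
    qed (use \<open>t \<ge> 0\<close> \<open>norm x = 1\<close> in auto)
    with q\<sigma> that(2) show ?thesis by simp
  qed
  have "0 \<le> Re (quad_form (\<rho> t) x)" if "norm x = 1" for x
  proof (rule field_le_epsilon)
    fix \<delta> :: real assume "\<delta> > 0"
    with shifted[of "\<delta> / exp (K * t)" x] that show "0 \<le> Re (quad_form (\<rho> t) x) + \<delta>" by simp
  qed
  then show ?thesis
    using herm[OF \<open>t \<ge> 0\<close>] Re_quad_form_nonneg_if_unit[of "\<rho> t"] by (simp add: psd_def)
qed

subsection \<open>The Lindblad generator and its dual\<close>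

lemma lindblad_smat: "lindblad H L X = smat (- \<i>) (H ** X - X ** H) + L ** X ** adj L
    - smat (1/2) (adj L ** L ** X) - smat (1/2) (X ** adj L ** L)"
  by (simp add: lindblad_def smat_def vec_eq_iff)

lemma gen_smat: "gen L X = adj L ** X ** L - smat (1/2) (adj L ** L ** X) - smat (1/2) (X ** adj L ** L)"
  by (simp add: gen_def smat_def vec_eq_iff)

lemma linear_lindblad: "linear (lindblad H L)"
  by (rule linearI)
    (simp_all add: lindblad_smat matrix_add_ldistrib matrix_add_rdistrib' smat_add smat_diff
      scaleR_matrix_mult_left scaleR_matrix_mult_right smat_scaleR algebra_simps)

lemma adj_lindblad: "self_adjoint H \<Longrightarrow> adj (lindblad H L X) = lindblad H L (adj X)"
  unfolding self_adjoint_def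
  by (simp add: lindblad_smat adj_add adj_diff adj_smat adj_mult matrix_mul_assoc smat_diff
      smat_uminus algebra_simps)

text \<open>Duality \<open>tr(W \<L>(X)) = tr(\<G>(W) X)\<close>; the Hamiltonian part drops out because \<open>W\<close>
  commutes with \<open>H\<close>.\<close>

lemma trace_mult_lindblad:
  assumes "W ** H = H ** W"
  shows "trace (W ** lindblad H L X) = trace (gen L W ** X)"
proof -
  have cyclic: "trace (A ** (B ** C)) = trace (C ** A ** B)" for A B C :: "'a::finite cmat"
    by (metis matrix_mul_assoc trace_mul_sym)
  have "trace (W ** (X ** H)) = trace (W ** (H ** X))"
    using cyclic[of W X H] cyclic[of H W X] assms by (simp add: matrix_mul_assoc)
  then have "trace (W ** lindblad H L X) = trace (W ** (L ** X ** adj L))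
      - 1/2 * trace (W ** (adj L ** L ** X)) - 1/2 * trace (W ** (X ** adj L ** L))"
    by (simp add: lindblad_smat matrix_add_ldistrib matrix_diff_ldistrib smat_mult_right trace_add
        trace_sub trace_smat)
  also have "\<dots> = trace (adj L ** W ** L ** X) - 1/2 * trace (W ** adj L ** L ** X)
      - 1/2 * trace (adj L ** L ** W ** X)"
    using cyclic[of W "L ** X" "adj L"] cyclic[of W X "adj L ** L"] cyclic[of "adj L ** L" W X]
    by (simp add: matrix_mul_assoc)
  also have "\<dots> = trace (gen L W ** X)"
    by (simp add: gen_smat matrix_diff_rdistrib smat_mult_left trace_sub trace_smat)
  finally show ?thesis .
qed

lemma trace_lindblad: "trace (lindblad H L X) = 0"
proof -
  have "gen L (mat 1) = 0"
    by (simp add: gen_smat smat_diff[symmetric] smat_def vec_eq_iff)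
  then show ?thesis using trace_mult_lindblad[of "mat 1" H L X] by (simp add: trace_def)
qed

lemma lindblad_inward:
  assumes Q: "psd Q" and Qx: "Q *v x = 0"
  shows "0 \<le> Re (quad_form (lindblad H L Q) x)"
proof -
  have saQ: "self_adjoint Q" using Q psd_def by blast
  have "quad_form (A ** Q) x = 0" "quad_form (Q ** A) x = 0" for A
    by (simp_all add: matrix_vector_mul_assoc[symmetric] herm_inner_self_adjoint[OF saQ] Qx)
  moreover have "Q ** adj L ** L = Q ** (adj L ** L)" by (simp add: matrix_mul_assoc)
  moreover have "quad_form (L ** Q ** adj L) x = quad_form Q (adj L *v x)"
    by (simp add: matrix_vector_mul_assoc[symmetric] herm_inner_adj)
  ultimately have "quad_form (lindblad H L Q) x = quad_form Q (adj L *v x)"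
    by (simp add: lindblad_smat quad_form_add quad_form_diff quad_form_smat)
  then show ?thesis using Q unfolding psd_def by simp
qed

locale lindblad_solution =
  fixes H L :: "'n::finite cmat" and \<rho> :: "real \<Rightarrow> 'n cmat"
  assumes self_adjoint_hamiltonian: "self_adjoint H"
    and master_equation: "\<And>t. t \<ge> 0 \<Longrightarrow> (\<rho> has_vector_derivative lindblad H L (\<rho> t)) (at t within {0..})"
    and initial_density_state: "density_state (\<rho> 0)"
begin

lemma self_adjoint_solution:
  assumes "t \<ge> 0"
  shows "self_adjoint (\<rho> t)"
proof -
  define Y where "Y s = \<rho> s - adj (\<rho> s)" for s
  have "(Y has_vector_derivative lindblad H L (Y s)) (at s within {0..})" if "s \<ge> 0" for s
  proof -
    have "(Y has_vector_derivative lindblad H L (\<rho> s) - adj (lindblad H L (\<rho> s))) (at s within {0..})"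
      unfolding Y_def
      by (rule has_vector_derivative_diff[OF master_equation[OF that]
            bounded_linear.has_vector_derivative[OF bounded_linear_adj master_equation[OF that]]])
    then show ?thesis
      by (simp add: Y_def adj_lindblad[OF self_adjoint_hamiltonian] linear_diff[OF linear_lindblad])
  qed
  moreover have "Y 0 = 0"
    using initial_density_state by (simp add: Y_def density_state_def psd_def self_adjoint_def)
  ultimately have "Y t = 0"
    using linear_ode_zero_solution[OF linear_conv_bounded_linear[THEN iffD1, OF linear_lindblad]] assms
    by blast
  then show ?thesis by (simp add: Y_def self_adjoint_def)
qed

lemma trace_solution:
  assumes "t \<ge> 0"
  shows "trace (\<rho> t) = 1"
proof -
  have "((\<lambda>s. trace (\<rho> s)) has_vector_derivative 0) (at s within {0..})" if "s \<in> {0..}" for s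
    using bounded_linear.has_vector_derivative[OF bounded_linear_trace master_equation] that
    by (simp add: trace_lindblad)
  then obtain c where "\<And>s. s \<in> {0..} \<Longrightarrow> trace (\<rho> s) = c"
    using has_vector_derivative_zero_constant[OF convex_real_interval(1)] by blast
  then show ?thesis
    using assms initial_density_state by (metis atLeast_iff density_state_def order_refl)
qed

lemma density_state_solution:
  assumes "t \<ge> 0"
  shows "density_state (\<rho> t)"
proof -
  have "psd (\<rho> t)"
    using psd_invariant_linear_flow[OF linear_lindblad lindblad_inward master_equation
        self_adjoint_solution] initial_density_state assms
    by (simp add: density_state_def)
  then show ?thesis using trace_solution[OF assms] by (simp add: density_state_def)
qed

lemma Re_trace_observable_has_derivative:
  assumes "W ** H = H ** W" "t \<ge> 0"
  shows "((\<lambda>t. Re (trace (W ** \<rho> t))) has_real_derivative Re (trace (gen L W ** \<rho> t)))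
    (at t within {0..})"
  using bounded_linear.has_vector_derivative[OF bounded_linear_Re_trace_mult[of W]
      master_equation[OF assms(2)]]
  by (simp add: has_real_derivative_iff_has_vector_derivative trace_mult_lindblad[OF assms(1)])

end

subsection \<open>Decay of the Lyapunov expectation\<close>

lemma Re_trace_le_norm_bound:
  assumes "self_adjoint B" "density_state \<rho>"
  shows "Re (trace (B ** \<rho>)) \<le> of_nat CARD('n)^2 * norm (B::'n::finite cmat)"
proof -
  have "0 \<le> Re (trace (((of_nat CARD('n)^2 * norm B) *\<^sub>R mat 1 - B) ** \<rho>))"
    using psd_trace_nonneg[OF psd_norm_bound_minus[OF assms(1)]] assms(2) by (simp add: density_state_def)
  then show ?thesis
    using assms(2) by (simp add: matrix_diff_rdistrib trace_sub scaleR_matrix_mult_left trace_scaleR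
        density_state_def)
qed

lemma square_Re_trace_le:
  assumes "self_adjoint V" "density_state \<rho>"
  shows "(Re (trace (V ** \<rho>)))\<^sup>2 \<le> Re (trace (V ** V ** \<rho>))"
proof -
  have "(cmod (trace (V ** \<rho>)))\<^sup>2 \<le> Re (trace (V ** V ** \<rho>))"
    using trace_Cauchy_Schwarz[OF psd_mat1, of \<rho> V] assms
    by (simp add: density_state_def self_adjoint_def)
  moreover have "(Re (trace (V ** \<rho>)))\<^sup>2 \<le> (cmod (trace (V ** \<rho>)))\<^sup>2"
    using abs_Re_le_cmod power_mono abs_ge_zero by (metis power2_abs)
  ultimately show ?thesis by simp
qed

text \<open>With \<open>A = -\<G>(V)\<close>: \<open>\<G>(V\<^sup>2) = \<D>(V) - AV - VA\<close>, and \<open>tr(AV\<rho>)\<close> is controlled by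
  Cauchy--Schwarz, \<open>|tr(AV\<rho>)|\<^sup>2 \<le> tr(A\<rho>) tr(VAV\<rho>) \<le> \<alpha> tr(A\<rho>) tr(V\<^sup>2\<rho>)\<close>, and AM-GM.\<close>

lemma Re_trace_gen_square_lower_bound:
  fixes V \<rho> :: "'n::finite cmat"
  assumes saV: "self_adjoint V" and A: "psd (- gen L V)"
    and D: "loewner_le (c *\<^sub>R (V ** V)) (dissipation L V)" and c: "c > 0" and P: "psd \<rho>"
  shows "c / 2 * Re (trace (V ** V ** \<rho>))
      - 2 * (of_nat CARD('n)^2 * norm (gen L V)) / c * Re (trace (- gen L V ** \<rho>))
    \<le> Re (trace (gen L (V ** V) ** \<rho>))"
proof -
  define A where "A = - gen L V"
  define \<alpha> where "\<alpha> = of_nat CARD('n)^2 * norm A"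
  define a where "a = Re (trace (A ** \<rho>))"
  define g where "g = Re (trace (V ** V ** \<rho>))"
  define b where "b = trace (A ** V ** \<rho>)"
  have adjV: "adj V = V" and saA: "self_adjoint A" and psdA: "psd A"
    using saV A by (simp_all add: self_adjoint_def A_def psd_def)
  have "gen L (V ** V) = dissipation L V - A ** V - V ** A"
    by (simp add: dissipation_def adjV A_def matrix_uminus_left matrix_uminus_right)
  then have split: "Re (trace (gen L (V ** V) ** \<rho>))
      = Re (trace (dissipation L V ** \<rho>)) - Re b - Re (trace (V ** A ** \<rho>))"
    by (simp add: matrix_diff_rdistrib trace_sub b_def)
  have "cnj (trace (V ** A ** \<rho>)) = trace (\<rho> ** (A ** V))"
    using P saA by (simp add: trace_adj[symmetric] adj_mult adjV psd_def self_adjoint_def matrix_mul_assoc)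
  then have sym: "Re (trace (V ** A ** \<rho>)) = Re b"
    unfolding b_def by (metis trace_mul_sym cnj.sel(1))
  have dissipative: "c * g \<le> Re (trace (dissipation L V ** \<rho>))"
    using psd_trace_nonneg[OF D[unfolded loewner_le_def] P]
    by (simp add: matrix_diff_rdistrib trace_sub scaleR_matrix_mult_left trace_scaleR g_def matrix_mul_assoc)
  have "Re (trace (adj V ** A ** V ** \<rho>)) \<le> \<alpha> * g"
    using psd_trace_nonneg[OF psd_congruence[OF psd_norm_bound_minus[OF saA]] P, of V]
    by (simp add: adjV matrix_diff_ldistrib matrix_diff_rdistrib trace_sub scaleR_matrix_mult_left
        scaleR_matrix_mult_right trace_scaleR g_def \<alpha>_def)
  then have "(cmod b)\<^sup>2 \<le> a * (\<alpha> * g)"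
    using trace_Cauchy_Schwarz[OF psdA P, of V] psd_trace_nonneg[OF psdA P]
    unfolding a_def b_def by (meson mult_left_mono order_trans)
  also have "\<dots> = (c / 2 * g) * (2 * \<alpha> / c * a)" using c by (simp add: field_simps)
  finally have "cmod b \<le> sqrt ((c / 2 * g) * (2 * \<alpha> / c * a))" by (rule real_le_rsqrt)
  also have "\<dots> \<le> (c / 2 * g + 2 * \<alpha> / c * a) / 2"
    using c psd_trace_nonneg[OF psd_congruence[OF psd_mat1, of V] P] psd_trace_nonneg[OF psdA P]
    by (intro arith_geo_mean_sqrt) (simp_all add: adjV g_def a_def \<alpha>_def)
  finally have "2 * Re b \<le> c / 2 * g + 2 * \<alpha> / c * a"
    using complex_Re_le_cmod[of b] by simp
  then show ?thesis
    using split sym dissipative unfolding A_def a_def g_def \<alpha>_def by simp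
qed

lemma tendsto_zero_if_second_moment_bounded:
  fixes f g g' a :: "real \<Rightarrow> real"
  assumes df: "\<And>t. t \<ge> 0 \<Longrightarrow> (f has_real_derivative - a t) (at t within {0..})"
    and dg: "\<And>t. t \<ge> 0 \<Longrightarrow> (g has_real_derivative g' t) (at t within {0..})"
    and a: "\<And>t. t \<ge> 0 \<Longrightarrow> 0 \<le> a t" and f: "\<And>t. t \<ge> 0 \<Longrightarrow> 0 \<le> f t"
    and fg: "\<And>t. t \<ge> 0 \<Longrightarrow> (f t)\<^sup>2 \<le> g t" and g\<beta>: "\<And>t. t \<ge> 0 \<Longrightarrow> g t \<le> \<beta>"
    and g': "\<And>t. t \<ge> 0 \<Longrightarrow> \<kappa> * g t - \<mu> * a t \<le> g' t"
    and \<kappa>: "\<kappa> > 0" and \<mu>: "\<mu> \<ge> 0"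
  shows "(f \<longlongrightarrow> 0) at_top"
proof -
  have antimono: "f t \<le> f s" if "0 \<le> s" "s \<le> t" for s t
  proof -
    have "- f s \<le> - f t"
      by (rule nondecreasing_if_derivative_nonneg[of "\<lambda>t. - f t" a])
        (use that a DERIV_minus[OF df] in auto)
    then show ?thesis by simp
  qed
  have "\<exists>T\<ge>0. f T < e" if e: "e > 0" for e
  proof (rule ccontr)
    assume "\<not> ?thesis"
    then have fe: "e \<le> f t" if "t \<ge> 0" for t using that by (simp add: not_less)
    define k where "k t = g t - \<mu> * f t - \<kappa> * e\<^sup>2 * t" for t
    have dk: "(k has_real_derivative g' t - \<mu> * (- a t) - \<kappa> * e\<^sup>2 * 1) (at t within {0..})"
      if "t \<ge> 0" for t
      unfolding k_def by (intro DERIV_diff DERIV_cmult DERIV_ident dg df that)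
    have "0 \<le> g' t - \<mu> * (- a t) - \<kappa> * e\<^sup>2 * 1" if "t > 0" for t
    proof -
      have "e\<^sup>2 \<le> (f t)\<^sup>2" using fe[of t] e that by (simp add: power_mono)
      then have "e\<^sup>2 \<le> g t" using fg[of t] that by simp
      then have "\<kappa> * e\<^sup>2 \<le> \<kappa> * g t" using \<kappa> by simp
      then show ?thesis using g'[of t] that by simp
    qed
    then have k_mono: "k 0 \<le> k t" if "t \<ge> 0" for t
      using nondecreasing_if_derivative_nonneg[OF dk _ order_refl that] by blast
    define t where "t = (\<bar>\<beta> - k 0\<bar> + 1) / (\<kappa> * e\<^sup>2)"
    have "\<kappa> * e\<^sup>2 > 0" using \<kappa> e by simp
    then have t0: "t \<ge> 0" and "\<kappa> * e\<^sup>2 * t = \<bar>\<beta> - k 0\<bar> + 1"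
      using \<kappa> e by (simp_all add: t_def)
    moreover have "k t \<le> \<beta> - \<kappa> * e\<^sup>2 * t"
      using g\<beta>[OF t0] mult_nonneg_nonneg[OF \<mu> f[OF t0]] by (simp add: k_def)
    ultimately show False using k_mono[OF t0] by linarith
  qed
  then show ?thesis
  proof (intro tendstoI)
    fix e :: real assume "e > 0"
    then obtain T where "T \<ge> 0" "f T < e" using \<open>\<And>e. e > 0 \<Longrightarrow> \<exists>T\<ge>0. f T < e\<close> by blast
    then have "\<forall>t\<ge>T. dist (f t) 0 < e" using antimono f by fastforce
    then show "\<forall>\<^sub>F t in at_top. dist (f t) 0 < e" unfolding eventually_at_top_linorder by blast
  qed
qed

lemma (in lindblad_solution) Re_trace_lyapunov_tendsto_zero:
  assumes commutes: "V ** H = H ** V" and "lyapunov L V" and c: "c > 0"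
    and dissipative: "loewner_le (c *\<^sub>R (V ** V)) (dissipation L V)"
  shows "((\<lambda>t. Re (trace (V ** \<rho> t))) \<longlongrightarrow> 0) at_top"
proof (rule tendsto_zero_if_second_moment_bounded[where \<kappa> = "c / 2"
      and \<mu> = "2 * (of_nat CARD('n)^2 * norm (gen L V)) / c" and \<beta> = "of_nat CARD('n)^2 * norm (V ** V)"])
  have psdV: "psd V" and psdA: "psd (- gen L V)"
    using assms(2) by (simp_all add: lyapunov_def loewner_le_def)
  then have saV: "self_adjoint V" by (simp add: psd_def)
  fix t :: real assume t: "t \<ge> 0"
  note \<rho> = density_state_solution[OF t]
  show "((\<lambda>t. Re (trace (V ** \<rho> t))) has_real_derivative - Re (trace (- gen L V ** \<rho> t))) (at t within {0..})"
    using Re_trace_observable_has_derivative[OF commutes t] by (simp add: matrix_uminus_left trace_uminus)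
  have "V ** V ** H = H ** (V ** V)" using commutes by (metis matrix_mul_assoc)
  then show "((\<lambda>t. Re (trace (V ** V ** \<rho> t))) has_real_derivative Re (trace (gen L (V ** V) ** \<rho> t)))
      (at t within {0..})"
    using t by (rule Re_trace_observable_has_derivative)
  have "psd (\<rho> t)" using \<rho> by (simp add: density_state_def)
  then show "0 \<le> Re (trace (- gen L V ** \<rho> t))" "0 \<le> Re (trace (V ** \<rho> t))"
    using psd_trace_nonneg[OF psdA] psd_trace_nonneg[OF psdV] by simp_all
  show "(Re (trace (V ** \<rho> t)))\<^sup>2 \<le> Re (trace (V ** V ** \<rho> t))"
    by (rule square_Re_trace_le[OF saV \<rho>])
  show "Re (trace (V ** V ** \<rho> t)) \<le> of_nat CARD('n)^2 * norm (V ** V)"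
    using saV \<rho> by (intro Re_trace_le_norm_bound) (simp_all add: self_adjoint_def adj_mult)
  show "c / 2 * Re (trace (V ** V ** \<rho> t))
      - 2 * (of_nat CARD('n)^2 * norm (gen L V)) / c * Re (trace (- gen L V ** \<rho> t))
      \<le> Re (trace (gen L (V ** V) ** \<rho> t))"
    using \<rho> by (intro Re_trace_gen_square_lower_bound[OF saV psdA dissipative c]) (simp add: density_state_def)
qed (use c in auto)

theorem lemma11:
  fixes H L V :: "complex^'n::finite^'n" and c :: real
    and \<rho> :: "real \<Rightarrow> complex^'n^'n"
  assumes "self_adjoint H"
    and "V ** H = H ** V"
    and "lyapunov L V"
    and "c > 0"
    and "loewner_le (c *\<^sub>R (V ** V)) (dissipation L V)"
    and "density_state (\<rho> 0)"
    and "\<And>t. t \<ge> 0 \<Longrightarrow> (\<rho> has_vector_derivative lindblad H L (\<rho> t)) (at t within {0..})"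
  shows "((\<lambda>t. trace (V ** \<rho> t)) \<longlongrightarrow> 0) at_top"
proof -
  interpret lindblad_solution H L \<rho> using assms(1,6,7) by unfold_locales
  have saV: "self_adjoint V" using assms(3) by (simp add: lyapunov_def psd_def)
  have "((\<lambda>t. complex_of_real (Re (trace (V ** \<rho> t)))) \<longlongrightarrow> 0) at_top"
    using tendsto_of_real[OF Re_trace_lyapunov_tendsto_zero[OF assms(2-5)]] by simp
  moreover have "\<forall>\<^sub>F t in at_top. of_real (Re (trace (V ** \<rho> t))) = trace (V ** \<rho> t)"
    unfolding eventually_at_top_linorder
    using trace_herm_real[OF saV self_adjoint_solution] by (metis order_refl)
  ultimately show ?thesis by (rule Lim_transform_eventually)
qed

end
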